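(* Let $(f^*,g^* )$ be a stationary $\hat\beta$-discounted Nash equilibrium of a two-player discrete time stochastic game for some $\hat\beta\in[0,1)$, and suppose: (D1) $(f^*,g^* )$ is pure, i.e. for each $s\in S$ there are actions $a^1_s\in A^1(s)$, $a^2_s\in A^2(s)$ with $f^*(s,a^1_s)=1$, $g^*(s,a^2_s)=1$; (D2) $P(f^*,g^* )=I$, i.e. every state is absorbing under $(f^*,g^* )$; (D3) for all $s\in S$, $a^1\in A^1(s)$: $r^1(s,a^1,a^2_s)\ge\sum_{s'\in S}p(s'\mid s,a^1,a^2_s)\,r^1(s',a^1_{s'},a^2_{s'})$, and for all $s\in S$, $a^2\in A^2(s)$: $r^2(s,a^1_s,a^2)\ge\sum_{s'\in S}p(s'\mid s,a^1_s,a^2)\,r^2(s',a^1_{s'},a^2_{s'})$. Then $(f^*,g^* )$ is a Blackwell-Nash equilibrium.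
   Context: A two-player discrete time stochastic game consists of a finite state set $S$, finite nonempty action sets $A^1(s),A^2(s)$ for each $s\in S$, reward functions $r^i(s,a^1,a^2)$ for $i=1,2$, and transition probabilities $p(s'\mid s,a^1,a^2)$. A stationary strategy of player 1 is $f=(f(s))_{s\in S}$ with $f(s)$ a probability distribution on $A^1(s)$, $f(s,a^1)$ denoting the probability of $a^1$; similarly $g$ for player 2. For a stationary pair $(f,g)$ let $r^i(s,f,g)=\sum_{a^1,a^2}f(s,a^1)g(s,a^2)r^i(s,a^1,a^2)$ and $P(f,g)$ the $|S|\times|S|$ matrix with entries $P(f,g)_{ss'}=\sum_{a^1,a^2}f(s,a^1)g(s,a^2)p(s'\mid s,a^1,a^2)$. For $\beta\in[0,1)$ the $\beta$-discounted payoff vector of player $i$ is $v^i_\beta(f,g)=(I-\beta P(f,g))^{-1}r^i(f,g)$, with $s$-th component $v^i_\beta(s,f,g)$. A stationary pair $(f^*,g^* )$ is a $\beta$-discounted Nash equilibrium if for all $s\in S$, $v^1_\beta(s,f^*,g^* )\ge v^1_\beta(s,f,g^* )$ for all stationary $f$ and $v^2_\beta(s,f^*,g^* )\ge v^2_\beta(s,f^*,g)$ for all stationary $g$. A stationary pair is a Blackwell-Nash equilibrium (BNE) if there is $\beta_0\in[0,1)$ such that it is a $\beta$-discounted Nash equilibrium for every $\beta\in[\beta_0,1)$. *)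

theory Defs
  imports "HOL-Analysis.Analysis" "HOL-Probability.Probability_Mass_Function"
begin

text \<open>Admissible action sets
A1 s, A2 s; rewards r i s a1 a2; transition probabilities p s a1 a2 s' = p(s'|s,a1,a2).
A stationary strategy is a map from states to distributions (pmf) supported on
the admissible actions; f(s,a) is pmf (f s) a.\<close>

definition stochastic_game ::
  "('s::finite \<Rightarrow> 'a set) \<Rightarrow> ('s \<Rightarrow> 'b set) \<Rightarrow> ('s \<Rightarrow> 'a \<Rightarrow> 'b \<Rightarrow> 's \<Rightarrow> real) \<Rightarrow> bool" where
  "stochastic_game A1 A2 p \<longleftrightarrow>
     (\<forall>s. finite (A1 s) \<and> A1 s \<noteq> {} \<and> finite (A2 s) \<and> A2 s \<noteq> {}) \<and>
     (\<forall>s a1 a2 s'. a1 \<in> A1 s \<longrightarrow> a2 \<in> A2 s \<longrightarrow> p s a1 a2 s' \<ge> 0) \<and>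
     (\<forall>s a1 a2. a1 \<in> A1 s \<longrightarrow> a2 \<in> A2 s \<longrightarrow> (\<Sum>s'\<in>UNIV. p s a1 a2 s') = 1)"

definition stationary :: "('s \<Rightarrow> 'a set) \<Rightarrow> ('s \<Rightarrow> 'a pmf) \<Rightarrow> bool" where
  "stationary A f \<longleftrightarrow> (\<forall>s. set_pmf (f s) \<subseteq> A s)"

definition rew_vec ::
  "('s::finite \<Rightarrow> 'a set) \<Rightarrow> ('s \<Rightarrow> 'b set) \<Rightarrow> ('s \<Rightarrow> 'a \<Rightarrow> 'b \<Rightarrow> real)
   \<Rightarrow> ('s \<Rightarrow> 'a pmf) \<Rightarrow> ('s \<Rightarrow> 'b pmf) \<Rightarrow> real^'s" where
  "rew_vec A1 A2 r f g = (\<chi> s. \<Sum>a1\<in>A1 s. \<Sum>a2\<in>A2 s. pmf (f s) a1 * pmf (g s) a2 * r s a1 a2)"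

definition trans_mat ::
  "('s::finite \<Rightarrow> 'a set) \<Rightarrow> ('s \<Rightarrow> 'b set) \<Rightarrow> ('s \<Rightarrow> 'a \<Rightarrow> 'b \<Rightarrow> 's \<Rightarrow> real)
   \<Rightarrow> ('s \<Rightarrow> 'a pmf) \<Rightarrow> ('s \<Rightarrow> 'b pmf) \<Rightarrow> real^'s^'s" where
  "trans_mat A1 A2 p f g = (\<chi> s s'. \<Sum>a1\<in>A1 s. \<Sum>a2\<in>A2 s. pmf (f s) a1 * pmf (g s) a2 * p s a1 a2 s')"

definition disc_payoff ::
  "('s::finite \<Rightarrow> 'a set) \<Rightarrow> ('s \<Rightarrow> 'b set) \<Rightarrow> ('s \<Rightarrow> 'a \<Rightarrow> 'b \<Rightarrow> 's \<Rightarrow> real)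
   \<Rightarrow> ('s \<Rightarrow> 'a \<Rightarrow> 'b \<Rightarrow> real) \<Rightarrow> real \<Rightarrow> ('s \<Rightarrow> 'a pmf) \<Rightarrow> ('s \<Rightarrow> 'b pmf) \<Rightarrow> real^'s" where
  "disc_payoff A1 A2 p r \<beta> f g =
     matrix_inv (mat 1 - \<beta> *\<^sub>R trans_mat A1 A2 p f g) *v rew_vec A1 A2 r f g"

definition disc_nash ::
  "('s::finite \<Rightarrow> 'a set) \<Rightarrow> ('s \<Rightarrow> 'b set) \<Rightarrow> ('s \<Rightarrow> 'a \<Rightarrow> 'b \<Rightarrow> 's \<Rightarrow> real)
   \<Rightarrow> ('s \<Rightarrow> 'a \<Rightarrow> 'b \<Rightarrow> real) \<Rightarrow> ('s \<Rightarrow> 'a \<Rightarrow> 'b \<Rightarrow> real)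
   \<Rightarrow> real \<Rightarrow> ('s \<Rightarrow> 'a pmf) \<Rightarrow> ('s \<Rightarrow> 'b pmf) \<Rightarrow> bool" where
  "disc_nash A1 A2 p r1 r2 \<beta> f g \<longleftrightarrow>
     stationary A1 f \<and> stationary A2 g \<and>
     (\<forall>s. (\<forall>f'. stationary A1 f' \<longrightarrow>
               disc_payoff A1 A2 p r1 \<beta> f g $ s \<ge> disc_payoff A1 A2 p r1 \<beta> f' g $ s) \<and>
          (\<forall>g'. stationary A2 g' \<longrightarrow>
               disc_payoff A1 A2 p r2 \<beta> f g $ s \<ge> disc_payoff A1 A2 p r2 \<beta> f g' $ s))"

definition blackwell_nash ::
  "('s::finite \<Rightarrow> 'a set) \<Rightarrow> ('s \<Rightarrow> 'b set) \<Rightarrow> ('s \<Rightarrow> 'a \<Rightarrow> 'b \<Rightarrow> 's \<Rightarrow> real)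
   \<Rightarrow> ('s \<Rightarrow> 'a \<Rightarrow> 'b \<Rightarrow> real) \<Rightarrow> ('s \<Rightarrow> 'a \<Rightarrow> 'b \<Rightarrow> real)
   \<Rightarrow> ('s \<Rightarrow> 'a pmf) \<Rightarrow> ('s \<Rightarrow> 'b pmf) \<Rightarrow> bool" where
  "blackwell_nash A1 A2 p r1 r2 f g \<longleftrightarrow>
     (\<exists>\<beta>0. 0 \<le> \<beta>0 \<and> \<beta>0 < 1 \<and>
        (\<forall>\<beta>. \<beta>0 \<le> \<beta> \<and> \<beta> < 1 \<longrightarrow> disc_nash A1 A2 p r1 r2 \<beta> f g))"

end

theory Submission
  imports Defs
begin

(* Under the pure pair every state is absorbing, so the beta-discounted payoff of player i at s
   is r_i(s, a_s) / (1 - beta). Since I - beta P is inverse-monotone for stochastic P, the pair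
   stays a beta-equilibrium as soon as every action a of player 1 at every state s satisfies
     (1 - beta) r_1(s, a) + beta * sum_s' p(s'|s, a) r_1(s', a_s') <= r_1(s, a_s).
   At the equilibrium discount factor this follows from the equilibrium property applied to the
   pure deviation at the single state s, because all other states remain absorbing; condition
   (D3) says that the left-hand side is nonincreasing in beta. Player 2 is handled by
   interchanging the roles of the players. *)

definition stochastic_matrix :: "real^'n::finite^'n \<Rightarrow> bool" where
  "stochastic_matrix P \<longleftrightarrow> (\<forall>i j. 0 \<le> P$i$j) \<and> (\<forall>i. (\<Sum>j\<in>UNIV. P$i$j) = 1)"

lemma mat1_minus_scaleR_mult_vec_nth:
  fixes P :: "real^'n::finite^'n"
  shows "((mat 1 - \<beta> *\<^sub>R P) *v x) $ i = x$i - \<beta> * (P *v x)$i"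
  by (simp add: matrix_vector_mult_diff_rdistrib,
      simp add: matrix_vector_mult_def sum_distrib_left mult.assoc)

lemma stochastic_matrix_max_principle:
  fixes P :: "real^'n::finite^'n" and d :: "real^'n"
  assumes P: "stochastic_matrix P" and \<beta>: "0 \<le> \<beta>" "\<beta> < 1"
    and d: "\<And>i. d$i \<le> \<beta> * (P *v d)$i"
  shows "d$i \<le> 0"
proof -
  define m where "m = Max (range (\<lambda>j. d$j))"
  have le_m: "d$j \<le> m" for j unfolding m_def by simp
  have "m \<in> range (\<lambda>j. d$j)" unfolding m_def by (rule Max_in) auto
  then obtain i0 where i0: "d$i0 = m" by auto
  have "(P *v d)$i0 = (\<Sum>j\<in>UNIV. P$i0$j * d$j)" by (simp add: matrix_vector_mult_def)
  also have "\<dots> \<le> (\<Sum>j\<in>UNIV. P$i0$j * m)"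
    using P by (intro sum_mono mult_left_mono le_m) (auto simp: stochastic_matrix_def)
  also have "\<dots> = m" using P by (simp add: sum_distrib_right[symmetric] stochastic_matrix_def)
  finally have "m \<le> \<beta> * m" using d[of i0] i0 \<beta> by (smt (verit) mult_left_mono)
  with \<beta> have "m \<le> 0" by (smt (verit) mult_le_cancel_right1)
  with le_m show ?thesis by (meson order_trans)
qed

lemma invertible_mat1_minus_scaleR_stochastic:
  fixes P :: "real^'n::finite^'n"
  assumes P: "stochastic_matrix P" and \<beta>: "0 \<le> \<beta>" "\<beta> < 1"
  shows "invertible (mat 1 - \<beta> *\<^sub>R P)"
  unfolding invertible_left_inverse matrix_left_invertible_ker
proof (intro allI impI)
  fix x :: "real^'n" assume x0: "(mat 1 - \<beta> *\<^sub>R P) *v x = 0"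
  have x: "x$i = \<beta> * (P *v x)$i" for i
    using arg_cong[OF x0, of "\<lambda>v. v$i"] by (simp add: mat1_minus_scaleR_mult_vec_nth)
  have nonpos: "x$i \<le> 0" for i
    by (rule stochastic_matrix_max_principle[OF P \<beta>]) (simp only: x order_refl)
  have "P *v (-x) = -(P *v x)" by (simp add: matrix_vector_mult_def sum_negf vec_eq_iff)
  then have nonneg: "(-x)$i \<le> 0" for i
    by (intro stochastic_matrix_max_principle[OF P \<beta>]) (simp add: x)
  show "x = 0" using nonpos nonneg by (simp add: vec_eq_iff order_antisym)
qed

lemma mult_vec_matrix_inv_cancel:
  fixes M :: "real^'n::finite^'n"
  assumes "invertible M"
  shows "M *v (matrix_inv M *v r) = r"
proof -
  have "M ** matrix_inv M = mat 1" using assms unfolding invertible_def matrix_inv_def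
    by (rule someI_ex[where P="\<lambda>A'. M ** A' = mat 1 \<and> A' ** M = mat 1", THEN conjunct1])
  then show ?thesis by (simp add: matrix_vector_mul_assoc)
qed

lemma mat1_minus_scaleR_stochastic_solution_le:
  fixes P :: "real^'n::finite^'n"
  assumes P: "stochastic_matrix P" and \<beta>: "0 \<le> \<beta>" "\<beta> < 1"
    and x: "(mat 1 - \<beta> *\<^sub>R P) *v x = r"
    and u: "\<And>i. r$i \<le> ((mat 1 - \<beta> *\<^sub>R P) *v u)$i"
  shows "x$i \<le> u$i"
proof -
  have "(x - u)$i \<le> 0"
  proof (rule stochastic_matrix_max_principle[OF P \<beta>])
    fix i
    show "(x - u)$i \<le> \<beta> * (P *v (x - u))$i"
      using u[of i] x by (auto simp: mat1_minus_scaleR_mult_vec_nth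
          matrix_vector_mult_diff_distrib right_diff_distrib)
  qed
  then show ?thesis by simp
qed

lemma stochastic_game_finite:
  assumes "stochastic_game A1 A2 p"
  shows "finite (A1 s)" "finite (A2 s)"
  using assms by (simp_all add: stochastic_game_def)

lemma stochastic_matrix_trans_mat:
  assumes game: "stochastic_game A1 A2 p" and f: "stationary A1 f" and g: "stationary A2 g"
  shows "stochastic_matrix (trans_mat A1 A2 p f g)"
  unfolding stochastic_matrix_def
proof (intro conjI allI)
  fix i j
  show "0 \<le> trans_mat A1 A2 p f g $ i $ j"
    using game unfolding trans_mat_def stochastic_game_def
    by (auto intro!: sum_nonneg mult_nonneg_nonneg)
next
  fix i
  have "(\<Sum>j\<in>UNIV. trans_mat A1 A2 p f g $ i $ j)
      = (\<Sum>a1\<in>A1 i. \<Sum>a2\<in>A2 i. pmf (f i) a1 * pmf (g i) a2 * (\<Sum>j\<in>UNIV. p i a1 a2 j))"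
    unfolding trans_mat_def by (simp add: sum_distrib_left sum.swap[of _ UNIV])
  also have "\<dots> = (\<Sum>a1\<in>A1 i. pmf (f i) a1) * (\<Sum>a2\<in>A2 i. pmf (g i) a2)"
    using game by (auto simp: stochastic_game_def sum_product intro!: sum.cong)
  also have "\<dots> = 1"
    using f g stochastic_game_finite[OF game] by (simp add: stationary_def sum_pmf_eq_1)
  finally show "(\<Sum>j\<in>UNIV. trans_mat A1 A2 p f g $ i $ j) = 1" .
qed

lemma disc_payoff_fixpoint:
  assumes "stochastic_game A1 A2 p" "stationary A1 f" "stationary A2 g" "0 \<le> \<beta>" "\<beta> < 1"
  shows "(mat 1 - \<beta> *\<^sub>R trans_mat A1 A2 p f g) *v disc_payoff A1 A2 p r \<beta> f g
    = rew_vec A1 A2 r f g"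
  unfolding disc_payoff_def using assms
  by (intro mult_vec_matrix_inv_cancel invertible_mat1_minus_scaleR_stochastic
      stochastic_matrix_trans_mat)

lemma disc_payoff_le_div:
  assumes game: "stochastic_game A1 A2 p" and f: "stationary A1 f" and g: "stationary A2 g"
    and \<beta>: "0 \<le> \<beta>" "\<beta> < 1"
    and R: "\<And>i. (1 - \<beta>) * rew_vec A1 A2 r f g $ i + \<beta> * (trans_mat A1 A2 p f g *v R)$i \<le> R$i"
  shows "disc_payoff A1 A2 p r \<beta> f g $ i \<le> R$i / (1 - \<beta>)"
proof -
  define u where "u = (\<chi> i. R$i / (1 - \<beta>))"
  have "rew_vec A1 A2 r f g $ i \<le> ((mat 1 - \<beta> *\<^sub>R trans_mat A1 A2 p f g) *v u)$i" for i
  proof -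
    have Pu: "(trans_mat A1 A2 p f g *v u)$i = (trans_mat A1 A2 p f g *v R)$i / (1 - \<beta>)"
      by (simp add: u_def matrix_vector_mult_def sum_divide_distrib)
    have "((mat 1 - \<beta> *\<^sub>R trans_mat A1 A2 p f g) *v u)$i
        = (R$i - \<beta> * (trans_mat A1 A2 p f g *v R)$i) / (1 - \<beta>)"
      unfolding mat1_minus_scaleR_mult_vec_nth Pu by (simp add: u_def diff_divide_distrib)
    with R[of i] \<beta> show ?thesis by (simp add: pos_le_divide_eq mult.commute)
  qed
  then have "disc_payoff A1 A2 p r \<beta> f g $ i \<le> u$i"
    by (rule mat1_minus_scaleR_stochastic_solution_le[OF stochastic_matrix_trans_mat[OF game f g]
          \<beta> disc_payoff_fixpoint[OF game f g \<beta>]])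
  then show ?thesis by (simp add: u_def)
qed

abbreviation pure_strategy :: "('s \<Rightarrow> 'a) \<Rightarrow> 's \<Rightarrow> 'a pmf" where
  "pure_strategy a \<equiv> \<lambda>s. return_pmf (a s)"

lemma pmf_eq_1_imp_return_pmf:
  assumes "pmf q x = 1"
  shows "q = return_pmf x"
proof -
  have "pmf q y = 0" if "y \<noteq> x" for y
  proof -
    have "pmf q x + pmf q y = measure_pmf.prob q {x, y}"
      using that by (simp add: measure_measure_pmf_finite)
    also have "\<dots> \<le> 1" by simp
    finally show ?thesis using assms pmf_nonneg[of q y] by linarith
  qed
  then have "set_pmf q \<subseteq> {x}" by (auto simp: set_pmf_eq)
  then show ?thesis by (simp add: set_pmf_subset_singleton)
qed

lemma sum_pmf_return_mult:
  assumes "finite A" "x \<in> A"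
  shows "(\<Sum>y\<in>A. pmf (return_pmf x) y * h y) = h x"
  using assms by (simp add: indicator_def if_distrib[of "\<lambda>c. c * _"] sum.delta')

lemma stationary_pure_strategy: "(\<And>s. a s \<in> A s) \<Longrightarrow> stationary A (pure_strategy a)"
  by (simp add: stationary_def)

lemma rew_vec_pure_right:
  assumes "stochastic_game A1 A2 p" "b s \<in> A2 s"
  shows "rew_vec A1 A2 r f (pure_strategy b) $ s = (\<Sum>a\<in>A1 s. pmf (f s) a * r s a (b s))"
  using assms stochastic_game_finite[OF assms(1)] unfolding rew_vec_def
  by (simp add: mult.assoc sum_distrib_left[symmetric] sum_pmf_return_mult del: pmf_return)

lemma trans_mat_pure_right:
  assumes "stochastic_game A1 A2 p" "b s \<in> A2 s"
  shows "trans_mat A1 A2 p f (pure_strategy b) $ s $ t = (\<Sum>a\<in>A1 s. pmf (f s) a * p s a (b s) t)"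
  using assms stochastic_game_finite[OF assms(1)] unfolding trans_mat_def
  by (simp add: mult.assoc sum_distrib_left[symmetric] sum_pmf_return_mult del: pmf_return)

lemma rew_vec_pure:
  assumes "stochastic_game A1 A2 p" "a s \<in> A1 s" "b s \<in> A2 s"
  shows "rew_vec A1 A2 r (pure_strategy a) (pure_strategy b) $ s = r s (a s) (b s)"
  using assms stochastic_game_finite[OF assms(1)]
  by (simp add: rew_vec_pure_right sum_pmf_return_mult del: pmf_return)

lemma trans_mat_pure:
  assumes "stochastic_game A1 A2 p" "a s \<in> A1 s" "b s \<in> A2 s"
  shows "trans_mat A1 A2 p (pure_strategy a) (pure_strategy b) $ s $ t = p s (a s) (b s) t"
  using assms stochastic_game_finite[OF assms(1)]
  by (simp add: trans_mat_pure_right sum_pmf_return_mult del: pmf_return)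

lemma disc_payoff_pure_equation:
  fixes r :: "'s::finite \<Rightarrow> 'a \<Rightarrow> 'b \<Rightarrow> real"
  assumes game: "stochastic_game A1 A2 p" and a: "\<And>s. a s \<in> A1 s" and b: "\<And>s. b s \<in> A2 s"
    and \<beta>: "0 \<le> \<beta>" "\<beta> < 1"
  defines "v \<equiv> disc_payoff A1 A2 p r \<beta> (pure_strategy a) (pure_strategy b)"
  shows "v$s - \<beta> * (\<Sum>t\<in>UNIV. p s (a s) (b s) t * v$t) = r s (a s) (b s)"
proof -
  have "((mat 1 - \<beta> *\<^sub>R trans_mat A1 A2 p (pure_strategy a) (pure_strategy b)) *v v)$s
      = rew_vec A1 A2 r (pure_strategy a) (pure_strategy b) $ s"
    unfolding v_def
    by (simp only: disc_payoff_fixpoint[OF game stationary_pure_strategy[OF a]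
          stationary_pure_strategy[OF b] \<beta>])
  then have "v$s - \<beta> * (trans_mat A1 A2 p (pure_strategy a) (pure_strategy b) *v v)$s
      = rew_vec A1 A2 r (pure_strategy a) (pure_strategy b) $ s"
    by (simp only: mat1_minus_scaleR_mult_vec_nth)
  then show ?thesis
    by (simp add: matrix_vector_mult_def rew_vec_pure[OF game a b] trans_mat_pure[OF game a b])
qed

lemma single_state_deviation_bound:
  fixes q u v :: "'n::finite \<Rightarrow> real"
  assumes q: "\<And>t. 0 \<le> q t" "(\<Sum>t\<in>UNIV. q t) = 1" and \<beta>: "0 \<le> \<beta>" "\<beta> \<le> 1"
    and le_at: "v s \<le> u s" and eq_off: "\<And>t. t \<noteq> s \<Longrightarrow> v t = u t"
    and row: "v s - \<beta> * (\<Sum>t\<in>UNIV. q t * v t) = x"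
  shows "x + \<beta> * (\<Sum>t\<in>UNIV. q t * u t) \<le> u s"
proof -
  have "(\<Sum>t\<in>UNIV. q t * u t) - (\<Sum>t\<in>UNIV. q t * v t) = (\<Sum>t\<in>UNIV. q t * (u t - v t))"
    by (simp add: sum_subtractf right_diff_distrib)
  also have "\<dots> = q s * (u s - v s)"
    using eq_off by (subst sum.remove[of _ s]) auto
  finally have diff: "(\<Sum>t\<in>UNIV. q t * u t) = (\<Sum>t\<in>UNIV. q t * v t) + q s * (u s - v s)"
    by simp
  have "q s \<le> 1" using member_le_sum[of s UNIV q] q by simp
  then have "\<beta> * q s * (u s - v s) \<le> u s - v s"
    using \<beta> q(1)[of s] le_at by (simp add: mult_le_one mult_left_le_one_le)
  moreover have "\<beta> * (\<Sum>t\<in>UNIV. q t * u t)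
      = \<beta> * (\<Sum>t\<in>UNIV. q t * v t) + \<beta> * q s * (u s - v s)"
    by (simp add: diff distrib_left mult.assoc)
  ultimately show ?thesis using row by linarith
qed

context
  fixes A1 :: "'s::finite \<Rightarrow> 'a set" and A2 :: "'s \<Rightarrow> 'b set"
    and p :: "'s \<Rightarrow> 'a \<Rightarrow> 'b \<Rightarrow> 's \<Rightarrow> real" and r :: "'s \<Rightarrow> 'a \<Rightarrow> 'b \<Rightarrow> real"
    and a1 :: "'s \<Rightarrow> 'a" and a2 :: "'s \<Rightarrow> 'b"
  assumes game: "stochastic_game A1 A2 p"
    and a1: "\<And>s. a1 s \<in> A1 s" and a2: "\<And>s. a2 s \<in> A2 s"
    and absorbing: "\<And>s t. p s (a1 s) (a2 s) t = of_bool (t = s)"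
begin

lemma disc_payoff_pure_absorbing:
  assumes \<beta>: "0 \<le> \<beta>" "\<beta> < 1" and a: "\<And>t. a t \<in> A1 t" and agree: "a s = a1 s"
  shows "disc_payoff A1 A2 p r \<beta> (pure_strategy a) (pure_strategy a2) $ s
    = r s (a1 s) (a2 s) / (1 - \<beta>)"
proof -
  let ?v = "disc_payoff A1 A2 p r \<beta> (pure_strategy a) (pure_strategy a2)"
  have "?v$s - \<beta> * ?v$s = r s (a1 s) (a2 s)"
    using disc_payoff_pure_equation[OF game a a2 \<beta>, of r s] by (simp add: agree absorbing)
  with \<beta> show ?thesis by (simp add: field_simps)
qed

lemma one_shot_deviation_le:
  assumes \<beta>: "0 \<le> \<beta>" "\<beta> < 1" and a: "a \<in> A1 s"
    and no_gain: "disc_payoff A1 A2 p r \<beta> (pure_strategy (a1(s := a))) (pure_strategy a2) $ s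
      \<le> disc_payoff A1 A2 p r \<beta> (pure_strategy a1) (pure_strategy a2) $ s"
  shows "(1 - \<beta>) * r s a (a2 s) + \<beta> * (\<Sum>t\<in>UNIV. p s a (a2 s) t * r t (a1 t) (a2 t))
    \<le> r s (a1 s) (a2 s)"
proof -
  define a' where "a' = a1(s := a)"
  have a': "a' t \<in> A1 t" for t using a a1 by (simp add: a'_def)
  define v where "v t = disc_payoff A1 A2 p r \<beta> (pure_strategy a') (pure_strategy a2) $ t" for t
  define u where "u t = r t (a1 t) (a2 t) / (1 - \<beta>)" for t
  have q: "0 \<le> p s a (a2 s) t" "(\<Sum>t\<in>UNIV. p s a (a2 s) t) = 1" for t
    using game a a2 by (auto simp: stochastic_game_def)
  have le_at: "v s \<le> u s"
    using no_gain disc_payoff_pure_absorbing[OF \<beta> a1 refl] by (simp add: v_def u_def a'_def)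
  have eq_off: "v t = u t" if "t \<noteq> s" for t
    using disc_payoff_pure_absorbing[OF \<beta> a', of t] that by (simp add: v_def u_def a'_def)
  have row: "v s - \<beta> * (\<Sum>t\<in>UNIV. p s a (a2 s) t * v t) = r s a (a2 s)"
    using disc_payoff_pure_equation[OF game a' a2 \<beta>, of r s] by (simp add: v_def a'_def)
  define S where "S = (\<Sum>t\<in>UNIV. p s a (a2 s) t * r t (a1 t) (a2 t))"
  have "(\<Sum>t\<in>UNIV. p s a (a2 s) t * u t) = S / (1 - \<beta>)"
    by (simp add: u_def S_def sum_divide_distrib)
  then have bound: "r s a (a2 s) + \<beta> * (S / (1 - \<beta>)) \<le> r s (a1 s) (a2 s) / (1 - \<beta>)"
    using single_state_deviation_bound[OF q _ _ le_at eq_off row] \<beta> by (simp add: u_def)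
  have cancel: "(1 - \<beta>) * (y / (1 - \<beta>)) = y" for y using \<beta> by simp
  have "(1 - \<beta>) * r s a (a2 s) + \<beta> * S
      = (1 - \<beta>) * (r s a (a2 s) + \<beta> * (S / (1 - \<beta>)))"
    by (metis cancel distrib_left mult.left_commute)
  also have "\<dots> \<le> (1 - \<beta>) * (r s (a1 s) (a2 s) / (1 - \<beta>))"
    using bound \<beta> by (intro mult_left_mono) auto
  finally show ?thesis unfolding S_def cancel .
qed

lemma pure_absorbing_best_reply:
  assumes \<beta>: "0 \<le> \<beta>\<^sub>0" "\<beta>\<^sub>0 \<le> \<beta>" "\<beta> < 1"
    and nash: "disc_nash A1 A2 p r r' \<beta>\<^sub>0 (pure_strategy a1) (pure_strategy a2)"
    and excessive: "\<And>s a. a \<in> A1 s \<Longrightarrow>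
      (\<Sum>t\<in>UNIV. p s a (a2 s) t * r t (a1 t) (a2 t)) \<le> r s a (a2 s)"
    and f: "stationary A1 f"
  shows "disc_payoff A1 A2 p r \<beta> f (pure_strategy a2) $ s
    \<le> disc_payoff A1 A2 p r \<beta> (pure_strategy a1) (pure_strategy a2) $ s"
proof -
  define R where "R = (\<chi> t. r t (a1 t) (a2 t))"
  have action: "(1 - \<beta>) * r t a (a2 t) + \<beta> * (\<Sum>j\<in>UNIV. p t a (a2 t) j * R$j) \<le> R$t"
    if a: "a \<in> A1 t" for t a
  proof -
    define S where "S = (\<Sum>j\<in>UNIV. p t a (a2 t) j * R$j)"
    have "stationary A1 (pure_strategy (a1(t := a)))"
      using a a1 by (intro stationary_pure_strategy) simp
    then have "(1 - \<beta>\<^sub>0) * r t a (a2 t) + \<beta>\<^sub>0 * S \<le> R$t"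
      using one_shot_deviation_le[OF _ _ a] nash \<beta> by (simp add: R_def S_def disc_nash_def)
    moreover have "(\<beta> - \<beta>\<^sub>0) * (S - r t a (a2 t)) \<le> 0"
      using excessive[OF a] \<beta> by (intro mult_nonneg_nonpos) (auto simp: R_def S_def)
    ultimately show ?thesis unfolding S_def[symmetric] by (simp add: algebra_simps)
  qed
  have "(1 - \<beta>) * rew_vec A1 A2 r f (pure_strategy a2) $ t
      + \<beta> * (trans_mat A1 A2 p f (pure_strategy a2) *v R)$t \<le> R$t" for t
  proof -
    have rew: "rew_vec A1 A2 r f (pure_strategy a2) $ t
        = (\<Sum>a\<in>A1 t. pmf (f t) a * r t a (a2 t))"
      by (rule rew_vec_pure_right[OF game a2])
    have trans: "(trans_mat A1 A2 p f (pure_strategy a2) *v R)$t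
        = (\<Sum>a\<in>A1 t. pmf (f t) a * (\<Sum>j\<in>UNIV. p t a (a2 t) j * R$j))"
      by (simp add: matrix_vector_mult_def trans_mat_pure_right[OF game a2] sum_distrib_left
          sum_distrib_right sum.swap[of _ UNIV] mult.assoc)
    have "(1 - \<beta>) * rew_vec A1 A2 r f (pure_strategy a2) $ t
        + \<beta> * (trans_mat A1 A2 p f (pure_strategy a2) *v R)$t
      = (\<Sum>a\<in>A1 t. pmf (f t) a
          * ((1 - \<beta>) * r t a (a2 t) + \<beta> * (\<Sum>j\<in>UNIV. p t a (a2 t) j * R$j)))"
      unfolding rew trans
      by (simp add: sum_distrib_left sum.distrib distrib_left mult.left_commute)
    also have "\<dots> \<le> (\<Sum>a\<in>A1 t. pmf (f t) a * R$t)"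
      using f by (intro sum_mono mult_left_mono action) (auto simp: stationary_def)
    also have "\<dots> = R$t"
      using f stochastic_game_finite[OF game]
      by (simp add: sum_distrib_right[symmetric] stationary_def sum_pmf_eq_1)
    finally show ?thesis .
  qed
  then have "disc_payoff A1 A2 p r \<beta> f (pure_strategy a2) $ s \<le> R$s / (1 - \<beta>)"
    using \<beta> by (intro disc_payoff_le_div[OF game f stationary_pure_strategy[OF a2]]) auto
  then show ?thesis
    using disc_payoff_pure_absorbing[OF _ _ a1 refl] \<beta> by (simp add: R_def)
qed

end

lemma stochastic_game_swap: "stochastic_game A1 A2 p \<Longrightarrow> stochastic_game A2 A1 (\<lambda>s b a. p s a b)"
  unfolding stochastic_game_def by auto

(* The swap equations are used only instantiated: as rewrite rules they loop, since every
   function can be written as \<lambda>s b a. p s a b. *)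
lemma trans_mat_swap: "trans_mat A2 A1 (\<lambda>s b a. p s a b) g f = trans_mat A1 A2 p f g"
proof -
  have "(\<Sum>b\<in>A2 s. \<Sum>a\<in>A1 s. pmf (g s) b * pmf (f s) a * p s a b t)
      = (\<Sum>a\<in>A1 s. \<Sum>b\<in>A2 s. pmf (f s) a * pmf (g s) b * p s a b t)" for s t
    by (subst sum.swap) (simp add: mult.commute)
  then show ?thesis unfolding trans_mat_def by (simp add: vec_eq_iff)
qed

lemma rew_vec_swap: "rew_vec A2 A1 (\<lambda>s b a. r s a b) g f = rew_vec A1 A2 r f g"
proof -
  have "(\<Sum>b\<in>A2 s. \<Sum>a\<in>A1 s. pmf (g s) b * pmf (f s) a * r s a b)
      = (\<Sum>a\<in>A1 s. \<Sum>b\<in>A2 s. pmf (f s) a * pmf (g s) b * r s a b)" for s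
    by (subst sum.swap) (simp add: mult.commute)
  then show ?thesis unfolding rew_vec_def by (simp add: vec_eq_iff)
qed

lemma disc_payoff_swap:
  "disc_payoff A2 A1 (\<lambda>s b a. p s a b) (\<lambda>s b a. r s a b) \<beta> g f = disc_payoff A1 A2 p r \<beta> f g"
  unfolding disc_payoff_def trans_mat_swap[of A2 A1 p g f] rew_vec_swap[of A2 A1 r g f] ..

lemma disc_nash_swap:
  "disc_nash A2 A1 (\<lambda>s b a. p s a b) (\<lambda>s b a. r2 s a b) (\<lambda>s b a. r1 s a b) \<beta> g f
    \<longleftrightarrow> disc_nash A1 A2 p r1 r2 \<beta> f g"
  unfolding disc_nash_def disc_payoff_swap[of A2 A1 p r1 \<beta>] disc_payoff_swap[of A2 A1 p r2 \<beta>]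
  by blast

theorem theorem3:
  fixes A1 :: "'s::finite \<Rightarrow> 'a set" and A2 :: "'s \<Rightarrow> 'b set"
    and p :: "'s \<Rightarrow> 'a \<Rightarrow> 'b \<Rightarrow> 's \<Rightarrow> real"
    and r1 r2 :: "'s \<Rightarrow> 'a \<Rightarrow> 'b \<Rightarrow> real"
    and fs :: "'s \<Rightarrow> 'a pmf" and gs :: "'s \<Rightarrow> 'b pmf"
    and \<beta>h :: real and a1s :: "'s \<Rightarrow> 'a" and a2s :: "'s \<Rightarrow> 'b"
  assumes game: "stochastic_game A1 A2 p"
    and beta: "0 \<le> \<beta>h" "\<beta>h < 1"
    and nash: "disc_nash A1 A2 p r1 r2 \<beta>h fs gs"
    and D1: "\<forall>s. a1s s \<in> A1 s \<and> a2s s \<in> A2 s \<and> pmf (fs s) (a1s s) = 1 \<and> pmf (gs s) (a2s s) = 1"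
    and D2: "trans_mat A1 A2 p fs gs = mat 1"
    and D3a: "\<forall>s. \<forall>a1\<in>A1 s. r1 s a1 (a2s s) \<ge> (\<Sum>s'\<in>UNIV. p s a1 (a2s s) s' * r1 s' (a1s s') (a2s s'))"
    and D3b: "\<forall>s. \<forall>a2\<in>A2 s. r2 s (a1s s) a2 \<ge> (\<Sum>s'\<in>UNIV. p s (a1s s) a2 s' * r2 s' (a1s s') (a2s s'))"
  shows "blackwell_nash A1 A2 p r1 r2 fs gs"
proof -
  have a1s: "\<And>s. a1s s \<in> A1 s" and a2s: "\<And>s. a2s s \<in> A2 s" using D1 by auto
  have pure: "fs = pure_strategy a1s" "gs = pure_strategy a2s"
    using D1 by (auto intro!: pmf_eq_1_imp_return_pmf)
  have absorbing: "p s (a1s s) (a2s s) t = of_bool (t = s)" for s t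
    using arg_cong[OF D2, of "\<lambda>M. M $ s $ t"]
    by (simp add: pure trans_mat_pure[OF game a1s a2s] mat_def)
  note nash1 = nash[unfolded pure]
  note nash2 =
    nash1[folded disc_nash_swap[of A2 A1 p r2 r1 \<beta>h "pure_strategy a2s" "pure_strategy a1s"]]
  have "disc_nash A1 A2 p r1 r2 \<beta> fs gs" if \<beta>: "\<beta>h \<le> \<beta>" "\<beta> < 1" for \<beta>
    unfolding disc_nash_def pure
  proof (intro conjI allI impI stationary_pure_strategy a1s a2s)
    fix s f assume "stationary A1 f"
    with D3a show "disc_payoff A1 A2 p r1 \<beta> f (pure_strategy a2s) $ s
        \<le> disc_payoff A1 A2 p r1 \<beta> (pure_strategy a1s) (pure_strategy a2s) $ s"
      by (intro pure_absorbing_best_reply[OF game a1s a2s absorbing beta(1) \<beta> nash1]) auto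
  next
    fix s g assume "stationary A2 g"
    with D3b have "disc_payoff A2 A1 (\<lambda>s b a. p s a b) (\<lambda>s b a. r2 s a b) \<beta> g
          (pure_strategy a1s) $ s
        \<le> disc_payoff A2 A1 (\<lambda>s b a. p s a b) (\<lambda>s b a. r2 s a b) \<beta> (pure_strategy a2s)
          (pure_strategy a1s) $ s"
      by (intro pure_absorbing_best_reply[OF stochastic_game_swap[OF game] a2s a1s absorbing
            beta(1) \<beta> nash2]) auto
    then show "disc_payoff A1 A2 p r2 \<beta> (pure_strategy a1s) g $ s
        \<le> disc_payoff A1 A2 p r2 \<beta> (pure_strategy a1s) (pure_strategy a2s) $ s"
      unfolding disc_payoff_swap[of A2 A1 p r2 \<beta>] .
  qed
  then show ?thesis unfolding blackwell_nash_def using beta by blast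
qed

end
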